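(* Let $X$ be a regular topological space. Then $X$ is $Scat(X)$-selectively pseudocompact if and only if $X$ is $Disc(X)$-selectively pseudocompact, where $Scat(X)$ is the family of scattered subsets of $X$ and $Disc(X)$ is the family of discrete subsets of $X$.
   Context: For a topological space $X$ and $\mathcal A\subseteq\mathcal P(X)$, $X$ is called $\mathcal A$-selectively pseudocompact if for every sequence $\langle U_n:n\in\omega\rangle$ of pairwise disjoint non-empty open subsets of $X$ one can choose sets $A_n\in\mathcal A$ with $A_n\subseteq U_n$ such that the family $\{A_n:n\in\omega\}$ has an accumulation point, i.e. there is a point $x\in X$ every neighbourhood of which meets $A_n$ for infinitely many $n$. A subset $Y\subseteq X$ is discrete if it is discrete in the subspace topology, and scattered if every non-empty subset of $Y$ has a point isolated in it. *)

theory Defs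
  imports "HOL-Analysis.Analysis"
begin

definition discrete_subset :: "'a topology \<Rightarrow> 'a set \<Rightarrow> bool" where
  "discrete_subset X Y \<longleftrightarrow> Y \<subseteq> topspace X \<and> subtopology X Y = discrete_topology Y"

definition scattered_subset :: "'a topology \<Rightarrow> 'a set \<Rightarrow> bool" where
  "scattered_subset X Y \<longleftrightarrow> Y \<subseteq> topspace X \<and>
     (\<forall>Z. Z \<subseteq> Y \<and> Z \<noteq> {} \<longrightarrow> (\<exists>z\<in>Z. openin (subtopology X Z) {z}))"

definition Disc :: "'a topology \<Rightarrow> 'a set set" where
  "Disc X = {Y. discrete_subset X Y}"

definition Scat :: "'a topology \<Rightarrow> 'a set set" where
  "Scat X = {Y. scattered_subset X Y}"

definition family_accumulation_point :: "'a topology \<Rightarrow> (nat \<Rightarrow> 'a set) \<Rightarrow> 'a \<Rightarrow> bool" where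
  "family_accumulation_point X A x \<longleftrightarrow> x \<in> topspace X \<and>
     (\<forall>U. openin X U \<and> x \<in> U \<longrightarrow> infinite {n. U \<inter> A n \<noteq> {}})"

definition selectively_pseudocompact :: "'a set set \<Rightarrow> 'a topology \<Rightarrow> bool" where
  "selectively_pseudocompact \<A> X \<longleftrightarrow>
     (\<forall>U :: nat \<Rightarrow> 'a set.
        (\<forall>n. openin X (U n) \<and> U n \<noteq> {}) \<and> pairwise (\<lambda>m n. disjnt (U m) (U n)) UNIV
        \<longrightarrow> (\<exists>A. (\<forall>n. A n \<in> \<A> \<and> A n \<subseteq> U n) \<and> (\<exists>x. family_accumulation_point X A x)))"

end

theory Submission
  imports Defs
begin

text \<open>The isolated points of a scattered set form a discrete subset that meets every open set
  meeting the scattered set, so any witness family of scattered sets can be shrunk to a family of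
  discrete sets with the same accumulation point. The converse holds because discrete sets are
  scattered.\<close>

definition isolated_points :: "'a topology \<Rightarrow> 'a set \<Rightarrow> 'a set" where
  "isolated_points X A = {a \<in> A. openin (subtopology X A) {a}}"

lemma isolated_points_subset: "isolated_points X A \<subseteq> A"
  by (auto simp: isolated_points_def)

lemma openin_subtopology_singleton_mono:
  assumes "openin (subtopology X A) {a}" "a \<in> B" "B \<subseteq> A"
  shows "openin (subtopology X B) {a}"
proof -
  obtain V where "openin X V" "{a} = V \<inter> A"
    using assms(1) by (auto simp: openin_subtopology)
  then have "{a} = V \<inter> B" using assms(2,3) by blast
  with \<open>openin X V\<close> show ?thesis by (auto simp: openin_subtopology)
qed

lemma discrete_subset_imp_scattered_subset:
  assumes "discrete_subset X Y"
  shows "scattered_subset X Y"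
  unfolding scattered_subset_def
proof (intro conjI allI impI)
  show "Y \<subseteq> topspace X" using assms by (simp add: discrete_subset_def)
  fix Z assume Z: "Z \<subseteq> Y \<and> Z \<noteq> {}"
  then obtain z where "z \<in> Z" by blast
  have "openin (subtopology X Y) {z}"
    using assms \<open>z \<in> Z\<close> Z by (auto simp: discrete_subset_def)
  then have "openin (subtopology X Z) {z}"
    using \<open>z \<in> Z\<close> Z by (auto intro: openin_subtopology_singleton_mono)
  with \<open>z \<in> Z\<close> show "\<exists>z\<in>Z. openin (subtopology X Z) {z}" ..
qed

lemma Disc_subset_Scat: "Disc X \<subseteq> Scat X"
  by (auto simp: Disc_def Scat_def discrete_subset_imp_scattered_subset)

lemma discrete_subset_isolated_points:
  assumes "A \<subseteq> topspace X"
  shows "discrete_subset X (isolated_points X A)"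
proof -
  let ?D = "isolated_points X A"
  have "discrete_topology ?D = subtopology X ?D"
    unfolding discrete_topology_unique
  proof (intro conjI ballI)
    show "topspace (subtopology X ?D) = ?D"
      using assms isolated_points_subset by (metis order_trans topspace_subtopology_subset)
    fix d assume "d \<in> ?D"
    then show "openin (subtopology X ?D) {d}"
      using isolated_points_subset
      by (auto simp: isolated_points_def intro: openin_subtopology_singleton_mono[of X A])
  qed
  then show ?thesis
    using assms isolated_points_subset by (metis discrete_subset_def order_trans)
qed

lemma scattered_subset_isolated_points_meets_open:
  assumes "scattered_subset X A" "openin X W" "W \<inter> A \<noteq> {}"
  shows "W \<inter> isolated_points X A \<noteq> {}"
proof -
  obtain z where z: "z \<in> W \<inter> A" "openin (subtopology X (W \<inter> A)) {z}"
    using assms(1,3) unfolding scattered_subset_def by (metis Int_lower2)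
  then obtain V where V: "openin X V" "{z} = V \<inter> (W \<inter> A)"
    by (auto simp: openin_subtopology)
  have "{z} = (V \<inter> W) \<inter> A" using V by blast
  moreover have "openin X (V \<inter> W)" using V assms(2) by auto
  ultimately have "openin (subtopology X A) {z}" by (auto simp: openin_subtopology)
  with z show ?thesis by (auto simp: isolated_points_def)
qed

lemma family_accumulation_point_shrink:
  assumes "family_accumulation_point X A x"
    and "\<And>n W. openin X W \<Longrightarrow> W \<inter> A n \<noteq> {} \<Longrightarrow> W \<inter> B n \<noteq> {}"
  shows "family_accumulation_point X B x"
  unfolding family_accumulation_point_def
proof (intro conjI allI impI)
  show "x \<in> topspace X" using assms(1) by (simp add: family_accumulation_point_def)
  fix W assume W: "openin X W \<and> x \<in> W"
  then have "infinite {n. W \<inter> A n \<noteq> {}}"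
    using assms(1) by (simp add: family_accumulation_point_def)
  moreover have "{n. W \<inter> A n \<noteq> {}} \<subseteq> {n. W \<inter> B n \<noteq> {}}"
    using assms(2) W by blast
  ultimately show "infinite {n. W \<inter> B n \<noteq> {}}" using finite_subset by blast
qed

lemma selectively_pseudocompact_refine:
  assumes "selectively_pseudocompact \<A> X"
    and "\<And>A. A \<in> \<A> \<Longrightarrow> \<exists>B\<in>\<B>. B \<subseteq> A \<and> (\<forall>W. openin X W \<and> W \<inter> A \<noteq> {} \<longrightarrow> W \<inter> B \<noteq> {})"
  shows "selectively_pseudocompact \<B> X"
  unfolding selectively_pseudocompact_def
proof (intro allI impI)
  fix U :: "nat \<Rightarrow> 'a set"
  assume "(\<forall>n. openin X (U n) \<and> U n \<noteq> {}) \<and> pairwise (\<lambda>m n. disjnt (U m) (U n)) UNIV"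
  then obtain A x where A: "\<And>n. A n \<in> \<A> \<and> A n \<subseteq> U n" "family_accumulation_point X A x"
    using assms(1) unfolding selectively_pseudocompact_def by blast
  have "\<forall>n. \<exists>B. B \<in> \<B> \<and> B \<subseteq> A n \<and>
      (\<forall>W. openin X W \<and> W \<inter> A n \<noteq> {} \<longrightarrow> W \<inter> B \<noteq> {})"
    using assms(2) A(1) by blast
  then obtain B where B: "\<And>n. B n \<in> \<B> \<and> B n \<subseteq> A n \<and>
      (\<forall>W. openin X W \<and> W \<inter> A n \<noteq> {} \<longrightarrow> W \<inter> B n \<noteq> {})"
    by metis
  have "family_accumulation_point X B x"
    by (rule family_accumulation_point_shrink[OF A(2)]) (use B in blast)
  moreover have "\<forall>n. B n \<in> \<B> \<and> B n \<subseteq> U n" using A(1) B by blast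
  ultimately show "\<exists>B. (\<forall>n. B n \<in> \<B> \<and> B n \<subseteq> U n) \<and> (\<exists>x. family_accumulation_point X B x)"
    by blast
qed

lemma selectively_pseudocompact_mono:
  assumes "selectively_pseudocompact \<A> X" "\<A> \<subseteq> \<B>"
  shows "selectively_pseudocompact \<B> X"
proof (rule selectively_pseudocompact_refine[OF assms(1)])
  fix A assume "A \<in> \<A>"
  then show "\<exists>B\<in>\<B>. B \<subseteq> A \<and> (\<forall>W. openin X W \<and> W \<inter> A \<noteq> {} \<longrightarrow> W \<inter> B \<noteq> {})"
    using assms(2) by (intro bexI[of _ A]) auto
qed

theorem proposition1p4:
  fixes X :: "'a topology"
  assumes "regular_space X"
  shows "selectively_pseudocompact (Scat X) X \<longleftrightarrow> selectively_pseudocompact (Disc X) X"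
proof
  assume "selectively_pseudocompact (Scat X) X"
  then show "selectively_pseudocompact (Disc X) X"
  proof (rule selectively_pseudocompact_refine)
    fix A assume "A \<in> Scat X"
    then have A: "scattered_subset X A" by (simp add: Scat_def)
    then have "isolated_points X A \<in> Disc X"
      unfolding Disc_def scattered_subset_def by (simp add: discrete_subset_isolated_points)
    moreover have "\<forall>W. openin X W \<and> W \<inter> A \<noteq> {} \<longrightarrow> W \<inter> isolated_points X A \<noteq> {}"
      using scattered_subset_isolated_points_meets_open[OF A] by blast
    ultimately show "\<exists>B\<in>Disc X. B \<subseteq> A \<and> (\<forall>W. openin X W \<and> W \<inter> A \<noteq> {} \<longrightarrow> W \<inter> B \<noteq> {})"
      by (intro bexI[of _ "isolated_points X A"] conjI isolated_points_subset)
  qed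
next
  assume "selectively_pseudocompact (Disc X) X"
  then show "selectively_pseudocompact (Scat X) X"
    by (rule selectively_pseudocompact_mono[OF _ Disc_subset_Scat])
qed

end
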